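(* Let $(X,d)$ be a $\delta$-Gromov hyperbolic space, $p\in X$, $\epsilon>0$, and $X^\epsilon=(X,d_\epsilon)$ the uniformized space. Suppose the canonical boundary map $\Phi:\partial_GX\to\partial_{d_\epsilon}X^\epsilon$ is bijective. Let $x\in\partial_{d_\epsilon}X^\epsilon$ and let $(x_n)$, $(y_n)\subseteq X$ both converge to $x$ with respect to $d_\epsilon$. Then any subsequence of $(x_n)$ that is a Gromov sequence and any subsequence of $(y_n)$ that is a Gromov sequence are equivalent Gromov sequences.
   Context: Gromov product $(x|y)_p=\frac12(d(p,x)+d(p,y)-d(x,y))$. $\delta$-Gromov hyperbolic: unbounded, proper, geodesic, and $(x|z)_p\ge\min\{(x|y)_p,(y|z)_p\}-\delta$ for all $x,y,z,p$. Uniformized metric: $d_\epsilon(x,y)=\inf_\gamma\int_\gamma e^{-\epsilon d(p,z)}ds(z)$ over $d$-rectifiable curves; $\partial_{d_\epsilon}X^\epsilon=\overline{X^\epsilon}\setminus X^\epsilon$ (closure in the completion). $\partial_GX$: geodesic rays from $p$ modulo $\gamma\sim\tilde\gamma$ iff $\sup_t d(\gamma(t),\tilde\gamma(t))<\infty$; $\Phi([\gamma])=\lim_{k\to\infty}\gamma(k)$ in $d_\epsilon$ (well defined). A Gromov sequence is $(x_n)$ with $(x_n|x_m)_p\to\infty$; Gromov sequences $(a_k),(b_k)$ are equivalent if $(a_k|b_k)_p\to\infty$. *)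

theory Defs
  imports "HOL-Analysis.Analysis"
begin

section \<open>Gromov hyperbolic spaces (the space X is a type of class metric_space, d = dist)\<close>

definition gromov_product :: "'a::metric_space \<Rightarrow> 'a \<Rightarrow> 'a \<Rightarrow> real" where
  "gromov_product p x y = (dist p x + dist p y - dist x y) / 2"

definition proper_space :: "'a::metric_space itself \<Rightarrow> bool" where
  "proper_space _ \<longleftrightarrow> (\<forall>x::'a. \<forall>r. compact (cball x r))"

definition geodesic_space :: "'a::metric_space itself \<Rightarrow> bool" where
  "geodesic_space _ \<longleftrightarrow> (\<forall>x y::'a. \<exists>g::real \<Rightarrow> 'a. g 0 = x \<and> g (dist x y) = y \<and>
      (\<forall>s\<in>{0..dist x y}. \<forall>t\<in>{0..dist x y}. dist (g s) (g t) = \<bar>s - t\<bar>))"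

definition gromov_hyperbolic :: "real \<Rightarrow> 'a::metric_space itself \<Rightarrow> bool" where
  "gromov_hyperbolic \<delta> T \<longleftrightarrow> \<not> bounded (UNIV :: 'a set) \<and> proper_space T \<and> geodesic_space T \<and>
     (\<forall>x y z w :: 'a. gromov_product w x z \<ge> min (gromov_product w x y) (gromov_product w y z) - \<delta>)"

definition curve_length :: "(real \<Rightarrow> 'a::metric_space) \<Rightarrow> real \<Rightarrow> real \<Rightarrow> real" where
  "curve_length g a b = Sup {(\<Sum>i<n. dist (g (t i)) (g (t (Suc i)))) | n t.
       t 0 = a \<and> t n = b \<and> (\<forall>i<n. t i \<le> t (Suc i))}"

definition arclength_param :: "(real \<Rightarrow> 'a::metric_space) \<Rightarrow> real \<Rightarrow> bool" where
  "arclength_param g L \<longleftrightarrow> 0 \<le> L \<and>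
     (\<forall>s t. 0 \<le> s \<and> s \<le> t \<and> t \<le> L \<longrightarrow>
        bdd_above {(\<Sum>i<n. dist (g (u i)) (g (u (Suc i)))) | n u.
            u 0 = s \<and> u n = t \<and> (\<forall>i<n. u i \<le> u (Suc i))} \<and>
        curve_length g s t = t - s)"

definition d_unif :: "real \<Rightarrow> 'a::metric_space \<Rightarrow> 'a \<Rightarrow> 'a \<Rightarrow> real" where
  "d_unif \<epsilon> p x y = Inf {integral {0..L} (\<lambda>t. exp (- \<epsilon> * dist p (g t))) | g L.
       arclength_param g L \<and> g 0 = x \<and> g L = y}"

section \<open>The boundary of the uniformized space, via the completion (Cauchy sequences)\<close>

definition unif_cauchy :: "real \<Rightarrow> 'a::metric_space \<Rightarrow> (nat \<Rightarrow> 'a) \<Rightarrow> bool" where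
  "unif_cauchy \<epsilon> p c \<longleftrightarrow> (\<forall>e>0. \<exists>N. \<forall>m\<ge>N. \<forall>n\<ge>N. d_unif \<epsilon> p (c m) (c n) < e)"

definition unif_equiv :: "real \<Rightarrow> 'a::metric_space \<Rightarrow> ((nat \<Rightarrow> 'a) \<times> (nat \<Rightarrow> 'a)) set" where
  "unif_equiv \<epsilon> p = {(c, c'). unif_cauchy \<epsilon> p c \<and> unif_cauchy \<epsilon> p c' \<and>
       (\<lambda>n. d_unif \<epsilon> p (c n) (c' n)) \<longlonglongrightarrow> 0}"

text \<open>Cauchy sequences not converging to a point of X: they represent the points of the
  completion not in X, i.e. of the closure of X in the completion minus X.\<close>
definition unif_boundary_seqs :: "real \<Rightarrow> 'a::metric_space \<Rightarrow> (nat \<Rightarrow> 'a) set" where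
  "unif_boundary_seqs \<epsilon> p = {c. unif_cauchy \<epsilon> p c \<and>
       \<not> (\<exists>z. (\<lambda>n. d_unif \<epsilon> p (c n) z) \<longlonglongrightarrow> 0)}"

definition unif_boundary :: "real \<Rightarrow> 'a::metric_space \<Rightarrow> (nat \<Rightarrow> 'a) set set" where
  "unif_boundary \<epsilon> p = unif_boundary_seqs \<epsilon> p // unif_equiv \<epsilon> p"

definition unif_converges_to :: "real \<Rightarrow> 'a::metric_space \<Rightarrow> (nat \<Rightarrow> 'a) \<Rightarrow> (nat \<Rightarrow> 'a) set \<Rightarrow> bool" where
  "unif_converges_to \<epsilon> p xs x \<longleftrightarrow> (\<exists>c\<in>x. (\<lambda>n. d_unif \<epsilon> p (xs n) (c n)) \<longlonglongrightarrow> 0)"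

section \<open>Gromov boundary via geodesic rays, and the canonical map\<close>

definition geodesic_ray :: "'a::metric_space \<Rightarrow> (real \<Rightarrow> 'a) \<Rightarrow> bool" where
  "geodesic_ray p g \<longleftrightarrow> g 0 = p \<and> (\<forall>s\<ge>0. \<forall>t\<ge>0. dist (g s) (g t) = \<bar>s - t\<bar>)"

definition ray_equiv :: "'a::metric_space \<Rightarrow> ((real \<Rightarrow> 'a) \<times> (real \<Rightarrow> 'a)) set" where
  "ray_equiv p = {(g, h). geodesic_ray p g \<and> geodesic_ray p h \<and>
       bdd_above ((\<lambda>t. dist (g t) (h t)) ` {0..})}"

definition gromov_boundary :: "'a::metric_space \<Rightarrow> (real \<Rightarrow> 'a) set set" where
  "gromov_boundary p = {g. geodesic_ray p g} // ray_equiv p"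

text \<open>Phi([g]) = d_eps-limit of g(k), i.e. the class of the sequence (g k)_k.\<close>
definition boundary_map :: "real \<Rightarrow> 'a::metric_space \<Rightarrow> (real \<Rightarrow> 'a) set \<Rightarrow> (nat \<Rightarrow> 'a) set" where
  "boundary_map \<epsilon> p C = (\<Union>g\<in>C. unif_equiv \<epsilon> p `` {(\<lambda>k. g (real k))})"

definition gromov_seq :: "'a::metric_space \<Rightarrow> (nat \<Rightarrow> 'a) \<Rightarrow> bool" where
  "gromov_seq p a \<longleftrightarrow> (\<forall>M. \<exists>N. \<forall>n\<ge>N. \<forall>m\<ge>N. gromov_product p (a n) (a m) \<ge> M)"

definition gromov_seq_equiv :: "'a::metric_space \<Rightarrow> (nat \<Rightarrow> 'a) \<Rightarrow> (nat \<Rightarrow> 'a) \<Rightarrow> bool" where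
  "gromov_seq_equiv p a b \<longleftrightarrow> gromov_seq p a \<and> gromov_seq p b \<and>
     filterlim (\<lambda>k. gromov_product p (a k) (b k)) at_top sequentially"

end

theory Submission
  imports Defs
begin

text \<open>
  A Gromov sequence \<open>(a\<^sub>n)\<close> determines a geodesic ray \<open>\<gamma>\<close> from \<open>p\<close> with
  \<open>(a\<^sub>n | \<gamma>(n))\<^sub>p \<rightarrow> \<infinity>\<close>: take the pointwise limit, along a free ultrafilter, of geodesic
  segments from \<open>p\<close> to \<open>a\<^sub>n\<close>; properness provides the limits and the \<open>\<delta>\<close>-inequality the
  estimate. Since \<open>d\<^sub>\<epsilon>(x, y) \<le> (2/\<epsilon>) exp (-\<epsilon> (x|y)\<^sub>p)\<close>, the sequence and \<open>\<gamma>(n)\<close> then have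
  the same \<open>d\<^sub>\<epsilon>\<close>-limit, i.e. \<open>\<Phi>[\<gamma>]\<close> is the boundary point the sequence converges to.
  Doing this for both subsequences yields rays \<open>\<gamma>, \<eta>\<close> with \<open>\<Phi>[\<gamma>] = x = \<Phi>[\<eta>]\<close>, so by
  injectivity of \<open>\<Phi>\<close> they stay at bounded distance and \<open>(\<gamma>(n) | \<eta>(n))\<^sub>p \<rightarrow> \<infinity>\<close>; two
  applications of the \<open>\<delta>\<close>-inequality along \<open>x (r n), \<gamma>(n), \<eta>(n), y (s n)\<close> finish the proof.
\<close>

section \<open>Inscribed polygons and arc-length parametrizations\<close>

definition inscribed_lengths :: "(real \<Rightarrow> 'a::metric_space) \<Rightarrow> real \<Rightarrow> real \<Rightarrow> real set" where
  "inscribed_lengths g s t = {(\<Sum>i<n. dist (g (u i)) (g (u (Suc i)))) | n u.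
       u 0 = s \<and> u n = t \<and> (\<forall>i<n. u i \<le> u (Suc i))}"

lemma arclength_param_iff_Sup:
  "arclength_param g L \<longleftrightarrow> 0 \<le> L \<and> (\<forall>s t. 0 \<le> s \<and> s \<le> t \<and> t \<le> L \<longrightarrow>
     bdd_above (inscribed_lengths g s t) \<and> Sup (inscribed_lengths g s t) = t - s)"
  unfolding arclength_param_def curve_length_def inscribed_lengths_def ..

lemma partition_mono:
  fixes u :: "nat \<Rightarrow> real"
  assumes "\<forall>i<n. u i \<le> u (Suc i)" "i \<le> j" "j \<le> n"
  shows "u i \<le> u j"
  using assms(2,3)
proof (induction j rule: dec_induct)
  case (step k)
  then have "u i \<le> u k" "u k \<le> u (Suc k)" using assms(1) by simp_all
  then show ?case by (rule order_trans)
qed simp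

lemma inscribed_lengthsE:
  assumes "a \<in> inscribed_lengths g s t"
  obtains n u where "a = (\<Sum>i<n. dist (g (u i)) (g (u (Suc i))))" "u 0 = s" "u n = t"
    "\<forall>i<n. u i \<le> u (Suc i)"
  using assms unfolding inscribed_lengths_def by blast

lemma inscribed_lengthsI:
  "u 0 = s \<Longrightarrow> u n = t \<Longrightarrow> \<forall>i<n. u i \<le> u (Suc i) \<Longrightarrow>
    (\<Sum>i<n. dist (g (u i)) (g (u (Suc i)))) \<in> inscribed_lengths g s t"
  unfolding inscribed_lengths_def by blast

lemma dist_in_inscribed_lengths: "s \<le> t \<Longrightarrow> dist (g s) (g t) \<in> inscribed_lengths g s t"
  using inscribed_lengthsI[of "\<lambda>i. if i = 0 then s else t" s 1 t g] by simp

lemma inscribed_lengths_le: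
  assumes lip: "1-lipschitz_on {s..t} g" and "a \<in> inscribed_lengths g s t"
  shows "a \<le> t - s"
proof -
  obtain n u where a: "a = (\<Sum>i<n. dist (g (u i)) (g (u (Suc i))))"
    and u: "u 0 = s" "u n = t" "\<forall>i<n. u i \<le> u (Suc i)"
    using assms(2) by (rule inscribed_lengthsE)
  have "a \<le> (\<Sum>i<n. u (Suc i) - u i)"
    unfolding a
  proof (rule sum_mono)
    fix i assume "i \<in> {..<n}"
    then have "u i \<in> {s..t}" "u (Suc i) \<in> {s..t}" "u i \<le> u (Suc i)"
      using partition_mono[OF u(3), of 0 i] partition_mono[OF u(3), of i n]
        partition_mono[OF u(3), of "Suc i" n] u by auto
    then show "dist (g (u i)) (g (u (Suc i))) \<le> u (Suc i) - u i"
      using lipschitz_onD[OF lip] by (fastforce simp: dist_real_def)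
  qed
  also have "\<dots> = t - s" using sum_lessThan_telescope[of u n] u by simp
  finally show ?thesis .
qed

lemma inscribed_lengths_append:
  assumes "a \<in> inscribed_lengths g s m" and "b \<in> inscribed_lengths g m t"
  shows "a + b \<in> inscribed_lengths g s t"
proof -
  obtain n1 u1 where a: "a = (\<Sum>i<n1. dist (g (u1 i)) (g (u1 (Suc i))))"
    and u1: "u1 0 = s" "u1 n1 = m" "\<forall>i<n1. u1 i \<le> u1 (Suc i)"
    using assms(1) by (rule inscribed_lengthsE)
  obtain n2 u2 where b: "b = (\<Sum>i<n2. dist (g (u2 i)) (g (u2 (Suc i))))"
    and u2: "u2 0 = m" "u2 n2 = t" "\<forall>i<n2. u2 i \<le> u2 (Suc i)"
    using assms(2) by (rule inscribed_lengthsE)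
  define u where "u i = (if i \<le> n1 then u1 i else u2 (i - n1))" for i
  have u_shift: "u (n1 + i) = u2 i" for i
    using u1(2) u2(1) by (cases i) (auto simp: u_def)
  have "\<forall>i<n1 + n2. u i \<le> u (Suc i)"
  proof (intro allI impI)
    fix i assume "i < n1 + n2"
    then show "u i \<le> u (Suc i)"
      using u1(3) u2(3) u_shift[of "i - n1"] u_shift[of "Suc (i - n1)"]
      by (cases "i < n1") (auto simp: u_def)
  qed
  moreover have "(\<Sum>i<n1 + k. dist (g (u i)) (g (u (Suc i)))) =
      a + (\<Sum>i<k. dist (g (u2 i)) (g (u2 (Suc i))))" for k
  proof (induction k)
    case 0
    show ?case unfolding a by (auto simp: u_def intro: sum.cong)
  next
    case (Suc k)
    then show ?case using u_shift[of k] u_shift[of "Suc k"] by simp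
  qed
  ultimately show ?thesis
    using inscribed_lengthsI[of u s "n1 + n2" t g] u1(1) u_shift[of n2] u2(2) b by (simp add: u_def)
qed

lemma inscribed_lengths_cong:
  assumes "\<And>v. v \<in> {s..t} \<Longrightarrow> f v = g v"
  shows "inscribed_lengths f s t = inscribed_lengths g s t"
proof -
  have "(\<Sum>i<n. dist (f (u i)) (f (u (Suc i)))) = (\<Sum>i<n. dist (g (u i)) (g (u (Suc i))))"
    if u: "u 0 = s" "u n = t" "\<forall>i<n. u i \<le> u (Suc i)" for n u
  proof (rule sum.cong)
    fix i assume "i \<in> {..<n}"
    then have "u i \<in> {s..t}" "u (Suc i) \<in> {s..t}"
      using partition_mono[OF u(3), of 0 i] partition_mono[OF u(3), of i n]
        partition_mono[OF u(3), of 0 "Suc i"] partition_mono[OF u(3), of "Suc i" n] u by auto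
    then show "dist (f (u i)) (f (u (Suc i))) = dist (g (u i)) (g (u (Suc i)))"
      using assms by simp
  qed simp
  then show ?thesis unfolding inscribed_lengths_def by (intro Collect_cong) (metis (no_types))
qed

lemma inscribed_lengths_shift:
  "inscribed_lengths (\<lambda>x. g (x + c)) s t = inscribed_lengths g (s + c) (t + c)"
proof -
  have sub: "inscribed_lengths (\<lambda>x. f (x + d)) a b \<subseteq> inscribed_lengths f (a + d) (b + d)"
    for f :: "real \<Rightarrow> 'a" and a b d
  proof
    fix y assume "y \<in> inscribed_lengths (\<lambda>x. f (x + d)) a b"
    then obtain n u where "y = (\<Sum>i<n. dist (f (u i + d)) (f (u (Suc i) + d)))"
      "u 0 = a" "u n = b" "\<forall>i<n. u i \<le> u (Suc i)"
      by (rule inscribed_lengthsE)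
    then show "y \<in> inscribed_lengths f (a + d) (b + d)"
      using inscribed_lengthsI[of "\<lambda>i. u i + d" "a + d" n "b + d" f] by simp
  qed
  show ?thesis
    using sub[of g c s t] sub[of "\<lambda>x. g (x + c)" "- c" "s + c" "t + c"] by simp
qed

lemma inscribed_lengths_reflect:
  "inscribed_lengths (\<lambda>x. g (c - x)) s t = inscribed_lengths g (c - t) (c - s)"
proof -
  have sub: "inscribed_lengths (\<lambda>x. f (d - x)) a b \<subseteq> inscribed_lengths f (d - b) (d - a)"
    for f :: "real \<Rightarrow> 'a" and a b d
  proof
    fix y assume "y \<in> inscribed_lengths (\<lambda>x. f (d - x)) a b"
    then obtain n u where y: "y = (\<Sum>i<n. dist (f (d - u i)) (f (d - u (Suc i))))"
      and u: "u 0 = a" "u n = b" "\<forall>i<n. u i \<le> u (Suc i)"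
      by (rule inscribed_lengthsE)
    define v where "v i = d - u (n - i)" for i
    have "(\<Sum>i<n. dist (f (v i)) (f (v (Suc i)))) =
        (\<Sum>i<n. dist (f (v (n - Suc i))) (f (v (Suc (n - Suc i)))))"
      by (rule sum.nat_diff_reindex[symmetric])
    also have "\<dots> = y" unfolding y
      by (rule sum.cong) (auto simp: v_def dist_commute Suc_diff_Suc)
    finally have "(\<Sum>i<n. dist (f (v i)) (f (v (Suc i)))) = y" .
    moreover have "\<forall>i<n. v i \<le> v (Suc i)"
    proof (intro allI impI)
      fix i assume "i < n"
      then have "n - i = Suc (n - Suc i)" by simp
      then show "v i \<le> v (Suc i)" using u(3) \<open>i < n\<close> by (simp add: v_def)
    qed
    ultimately show "y \<in> inscribed_lengths f (d - b) (d - a)"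
      using inscribed_lengthsI[of v "d - b" n "d - a" f] u by (simp add: v_def)
  qed
  show ?thesis
    using sub[of g c s t] sub[of "\<lambda>x. g (c - x)" c "c - t" "c - s"] by simp
qed

lemma cSup_add_le:
  fixes A B C :: "real set"
  assumes "A \<noteq> {}" "B \<noteq> {}" "bdd_above C" "\<And>a b. a \<in> A \<Longrightarrow> b \<in> B \<Longrightarrow> a + b \<in> C"
  shows "Sup A + Sup B \<le> Sup C"
proof -
  have "Sup A \<le> Sup C - b" if "b \<in> B" for b
    using assms that by (intro cSup_least) (auto simp: cSup_upper algebra_simps)
  then have "Sup B \<le> Sup C - Sup A"
    using assms(2) by (intro cSup_least) (auto simp: algebra_simps)
  then show ?thesis by simp
qed

lemma bdd_above_inscribed_lengths:
  assumes "1-lipschitz_on {s..t} g"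
  shows "bdd_above (inscribed_lengths g s t)"
  using inscribed_lengths_le[OF assms] by (rule bdd_aboveI)

lemma arclength_param_lipschitz:
  assumes "arclength_param g L"
  shows "1-lipschitz_on {0..L} g"
proof (rule lipschitz_on_leI)
  fix v w assume "v \<in> {0..L}" "w \<in> {0..L}" "v \<le> w"
  then have bdd: "bdd_above (inscribed_lengths g v w)"
    and Sup: "Sup (inscribed_lengths g v w) = w - v"
    using assms unfolding arclength_param_iff_Sup by auto
  have "dist (g v) (g w) \<le> Sup (inscribed_lengths g v w)"
    using bdd by (intro cSup_upper dist_in_inscribed_lengths \<open>v \<le> w\<close>)
  then show "dist (g v) (g w) \<le> 1 * dist v w"
    using Sup \<open>v \<le> w\<close> by (simp add: dist_real_def)
qed simp

lemma arclength_paramI: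
  assumes "0 \<le> L" and lip: "1-lipschitz_on {0..L} g"
    and ge: "\<And>s t. 0 \<le> s \<Longrightarrow> s \<le> t \<Longrightarrow> t \<le> L \<Longrightarrow> t - s \<le> Sup (inscribed_lengths g s t)"
  shows "arclength_param g L"
  unfolding arclength_param_iff_Sup
proof (intro conjI allI impI assms(1))
  fix s t assume st: "0 \<le> s \<and> s \<le> t \<and> t \<le> L"
  then have lip': "1-lipschitz_on {s..t} g" by (auto intro: lipschitz_on_subset[OF lip])
  show bdd: "bdd_above (inscribed_lengths g s t)"
    using bdd_above_inscribed_lengths[OF lip'] .
  show "Sup (inscribed_lengths g s t) = t - s"
  proof (rule antisym)
    show "Sup (inscribed_lengths g s t) \<le> t - s"
      using inscribed_lengths_le[OF lip'] dist_in_inscribed_lengths[of s t g] st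
      by (intro cSup_least) auto
  qed (use ge st in auto)
qed

lemma arclength_param_isometry:
  assumes "0 \<le> L" and iso: "\<And>v w. v \<in> {0..L} \<Longrightarrow> w \<in> {0..L} \<Longrightarrow> dist (g v) (g w) = \<bar>v - w\<bar>"
  shows "arclength_param g L"
proof -
  have lip: "1-lipschitz_on {0..L} g"
    by (rule lipschitz_onI) (simp_all add: iso dist_real_def)
  show ?thesis
  proof (rule arclength_paramI[OF assms(1) lip])
    fix s t assume st: "0 \<le> s" "s \<le> t" "t \<le> L"
    then have "1-lipschitz_on {s..t} g" by (intro lipschitz_on_subset[OF lip]) auto
    then have "bdd_above (inscribed_lengths g s t)" by (rule bdd_above_inscribed_lengths)
    then have "dist (g s) (g t) \<le> Sup (inscribed_lengths g s t)"
      using dist_in_inscribed_lengths[OF st(2)] by (rule cSup_upper[rotated])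
    then show "t - s \<le> Sup (inscribed_lengths g s t)" using iso[of s t] st by simp
  qed
qed

lemma arclength_param_reflect:
  assumes "arclength_param g L"
  shows "arclength_param (\<lambda>t. g (L - t)) L"
  unfolding arclength_param_iff_Sup inscribed_lengths_reflect
proof (intro conjI allI impI)
  show "0 \<le> L" using assms unfolding arclength_param_def by simp
  fix s t assume "0 \<le> s \<and> s \<le> t \<and> t \<le> L"
  then have "bdd_above (inscribed_lengths g (L - t) (L - s)) \<and>
      Sup (inscribed_lengths g (L - t) (L - s)) = (L - s) - (L - t)"
    using assms unfolding arclength_param_iff_Sup by auto
  then show "bdd_above (inscribed_lengths g (L - t) (L - s))"
    "Sup (inscribed_lengths g (L - t) (L - s)) = t - s" by auto
qed

lemma arclength_param_append:
  assumes g1: "arclength_param g1 L1" and g2: "arclength_param g2 L2" and joint: "g1 L1 = g2 0"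
  shows "arclength_param (\<lambda>t. if t \<le> L1 then g1 t else g2 (t - L1)) (L1 + L2)"
    (is "arclength_param ?h _")
proof -
  have L1: "0 \<le> L1" and L2: "0 \<le> L2" using g1 g2 unfolding arclength_param_def by auto
  have "1-lipschitz_on {L1..L1 + L2} (\<lambda>t. g2 (t - L1))"
  proof (rule lipschitz_onI)
    fix x y assume "x \<in> {L1..L1 + L2}" "y \<in> {L1..L1 + L2}"
    then show "dist (g2 (x - L1)) (g2 (y - L1)) \<le> 1 * dist x y"
      using lipschitz_onD[OF arclength_param_lipschitz[OF g2], of "x - L1" "y - L1"]
      by (simp add: dist_real_def)
  qed simp
  then have lip: "1-lipschitz_on {0..L1 + L2} ?h"
    using lipschitz_on_concat[OF arclength_param_lipschitz[OF g1]] joint by simp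
  have left: "Sup (inscribed_lengths ?h s t) = t - s" if "0 \<le> s" "s \<le> t" "t \<le> L1" for s t
  proof -
    have "inscribed_lengths ?h s t = inscribed_lengths g1 s t"
      by (rule inscribed_lengths_cong) (use that in auto)
    then show ?thesis using g1 that unfolding arclength_param_iff_Sup by auto
  qed
  have right: "Sup (inscribed_lengths ?h s t) = t - s" if "L1 \<le> s" "s \<le> t" "t \<le> L1 + L2" for s t
  proof -
    have "inscribed_lengths ?h s t = inscribed_lengths (\<lambda>x. g2 (x + - L1)) s t"
    proof (rule inscribed_lengths_cong)
      fix v assume "v \<in> {s..t}"
      then show "?h v = g2 (v + - L1)" using that joint by (cases "v = L1") auto
    qed
    also have "\<dots> = inscribed_lengths g2 (s - L1) (t - L1)"
      using inscribed_lengths_shift[of g2 "- L1" s t] by simp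
    finally show ?thesis using g2 that unfolding arclength_param_iff_Sup by auto
  qed
  show ?thesis
  proof (rule arclength_paramI[OF _ lip])
    fix s t assume st: "0 \<le> s" "s \<le> t" "t \<le> L1 + L2"
    consider "t \<le> L1" | "L1 \<le> s" | "s \<le> L1" "L1 \<le> t" by linarith
    then show "t - s \<le> Sup (inscribed_lengths ?h s t)"
    proof cases
      case 3
      have "Sup (inscribed_lengths ?h s L1) + Sup (inscribed_lengths ?h L1 t)
          \<le> Sup (inscribed_lengths ?h s t)"
        using dist_in_inscribed_lengths[of s L1 ?h] dist_in_inscribed_lengths[of L1 t ?h] st 3
        by (intro cSup_add_le bdd_above_inscribed_lengths inscribed_lengths_append
            lipschitz_on_subset[OF lip]) auto
      then show ?thesis using left[of s L1] right[of L1 t] st 3 by simp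
    qed (use left right st in auto)
  qed (use L1 L2 in simp)
qed

section \<open>The uniformized distance\<close>

definition unif_length :: "real \<Rightarrow> 'a::metric_space \<Rightarrow> (real \<Rightarrow> 'a) \<Rightarrow> real \<Rightarrow> real" where
  "unif_length \<epsilon> p g L = integral {0..L} (\<lambda>t. exp (- \<epsilon> * dist p (g t)))"

lemma d_unif_eq_Inf_unif_length:
  "d_unif \<epsilon> p x y = Inf {unif_length \<epsilon> p g L | g L. arclength_param g L \<and> g 0 = x \<and> g L = y}"
  unfolding d_unif_def unif_length_def ..

lemma lipschitz_weight_integrable:
  fixes g :: "real \<Rightarrow> 'a::metric_space"
  assumes "C-lipschitz_on {a..b} g"
  shows "(\<lambda>t. exp (- \<epsilon> * dist p (g t))) integrable_on {a..b}"
proof -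
  have "continuous_on {a..b} g" using assms by (rule lipschitz_on_continuous_on)
  then have "continuous_on {a..b} (\<lambda>t. exp (- \<epsilon> * dist p (g t)))"
    by (intro continuous_intros)
  then show ?thesis by (rule integrable_continuous_interval)
qed

lemma unif_length_nonneg:
  assumes "arclength_param g L"
  shows "0 \<le> unif_length \<epsilon> p g L"
  unfolding unif_length_def
  using lipschitz_weight_integrable[OF arclength_param_lipschitz[OF assms]] by (rule integral_nonneg) simp

lemma unif_length_reflect: "unif_length \<epsilon> p (\<lambda>t. g (L - t)) L = unif_length \<epsilon> p g L"
proof -
  have "unif_length \<epsilon> p (\<lambda>t. g (L - t)) L
      = integral {0..L} ((\<lambda>y. exp (- \<epsilon> * dist p (g (- y)))) \<circ> (+) (- L))"
    unfolding unif_length_def by (simp add: o_def)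
  also have "\<dots> = integral {- L..- 0} (\<lambda>y. exp (- \<epsilon> * dist p (g (- y))))"
    unfolding integral_shift_Icc_real by simp
  also have "\<dots> = unif_length \<epsilon> p g L"
    unfolding unif_length_def by (rule Henstock_Kurzweil_Integration.integral_reflect_real)
  finally show ?thesis .
qed

lemma unif_length_append:
  assumes g1: "arclength_param g1 L1" and g2: "arclength_param g2 L2" and joint: "g1 L1 = g2 0"
  shows "unif_length \<epsilon> p (\<lambda>t. if t \<le> L1 then g1 t else g2 (t - L1)) (L1 + L2)
    = unif_length \<epsilon> p g1 L1 + unif_length \<epsilon> p g2 L2"
    (is "unif_length \<epsilon> p ?h _ = _")
proof -
  define w where "w f = (\<lambda>t::real. exp (- \<epsilon> * dist p (f t)))" for f
  have unif_length_w: "unif_length \<epsilon> p f L = integral {0..L} (w f)" for f L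
    by (simp add: unif_length_def w_def)
  have L1: "0 \<le> L1" and L2: "0 \<le> L2" using g1 g2 unfolding arclength_param_def by auto
  have "w ?h integrable_on {0..L1 + L2}"
    unfolding w_def
    by (rule lipschitz_weight_integrable[OF arclength_param_lipschitz[OF arclength_param_append[OF assms]]])
  then have "unif_length \<epsilon> p ?h (L1 + L2) = integral {0..L1} (w ?h) + integral {L1..L1 + L2} (w ?h)"
    unfolding unif_length_w using L1 L2 by (simp add: Henstock_Kurzweil_Integration.integral_combine)
  also have "integral {0..L1} (w ?h) = unif_length \<epsilon> p g1 L1"
    unfolding unif_length_w w_def by (rule integral_cong) simp
  also have "integral {L1..L1 + L2} (w ?h) = integral {L1..L1 + L2} (w g2 \<circ> (\<lambda>t. t - L1))"
    by (rule integral_cong) (use joint in \<open>auto simp: w_def\<close>)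
  also have "\<dots> = unif_length \<epsilon> p g2 L2"
    using integral_shift_Icc_real[of 0 L2 "w g2 \<circ> (\<lambda>t. t - L1)" L1]
    by (simp add: o_def unif_length_w add.commute)
  finally show ?thesis .
qed

lemma geodesic_segment:
  assumes "geodesic_space TYPE('a::metric_space)"
  obtains g where "arclength_param g (dist x y)" "g 0 = x" "g (dist x y) = (y::'a)"
    "\<And>v w. v \<in> {0..dist x y} \<Longrightarrow> w \<in> {0..dist x y} \<Longrightarrow> dist (g v) (g w) = \<bar>v - w\<bar>"
proof -
  obtain g where "g 0 = x" "g (dist x y) = y"
    "\<forall>v\<in>{0..dist x y}. \<forall>w\<in>{0..dist x y}. dist (g v) (g w) = \<bar>v - w\<bar>"
    using assms unfolding geodesic_space_def by blast
  then show ?thesis using that arclength_param_isometry[of "dist x y" g] by auto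
qed

lemma d_unif_le_unif_length:
  assumes "arclength_param g L" "g 0 = x" "g L = y"
  shows "d_unif \<epsilon> p x y \<le> unif_length \<epsilon> p g L"
  unfolding d_unif_eq_Inf_unif_length
  by (rule cInf_lower) (use assms unif_length_nonneg in \<open>auto intro!: bdd_belowI[where m = 0]\<close>)

lemma d_unif_nonneg:
  assumes "geodesic_space TYPE('a::metric_space)"
  shows "0 \<le> d_unif \<epsilon> p x (y::'a)"
proof -
  obtain g where "arclength_param g (dist x y)" "g 0 = x" "g (dist x y) = y"
    using geodesic_segment[OF assms] by blast
  then show ?thesis
    unfolding d_unif_eq_Inf_unif_length by (intro cInf_greatest) (use unif_length_nonneg in auto)
qed

lemma d_unif_self:
  assumes "geodesic_space TYPE('a::metric_space)"
  shows "d_unif \<epsilon> p x (x::'a) = 0"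
proof -
  have "arclength_param (\<lambda>_. x) 0" by (rule arclength_param_isometry) auto
  then have "d_unif \<epsilon> p x x \<le> unif_length \<epsilon> p (\<lambda>_. x) 0" by (rule d_unif_le_unif_length) auto
  then show ?thesis using d_unif_nonneg[OF assms, of \<epsilon> p x x] by (simp add: unif_length_def)
qed

lemma d_unif_commute:
  assumes "geodesic_space TYPE('a::metric_space)"
  shows "d_unif \<epsilon> p x y = d_unif \<epsilon> p y (x::'a)"
proof -
  have le: "d_unif \<epsilon> p a b \<le> d_unif \<epsilon> p b a" for a b :: 'a
  proof -
    obtain g0 where "arclength_param g0 (dist b a)" "g0 0 = b" "g0 (dist b a) = a"
      using geodesic_segment[OF assms] by blast
    moreover have "d_unif \<epsilon> p a b \<le> unif_length \<epsilon> p g L"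
      if "arclength_param g L" "g 0 = b" "g L = a" for g L
      using d_unif_le_unif_length[OF arclength_param_reflect[OF that(1)], of a b \<epsilon> p] that
      by (simp add: unif_length_reflect)
    ultimately show ?thesis
      unfolding d_unif_eq_Inf_unif_length[of \<epsilon> p b a] by (intro cInf_greatest) auto
  qed
  show ?thesis using le[of x y] le[of y x] by simp
qed

lemma d_unif_triangle:
  assumes geo: "geodesic_space TYPE('a::metric_space)"
  shows "d_unif \<epsilon> p x z \<le> d_unif \<epsilon> p x y + d_unif \<epsilon> p y (z::'a)"
proof -
  have along_joined: "d_unif \<epsilon> p x z \<le> unif_length \<epsilon> p g1 L1 + unif_length \<epsilon> p g2 L2"
    if g1: "arclength_param g1 L1" "g1 0 = x" "g1 L1 = y"
    and g2: "arclength_param g2 L2" "g2 0 = y" "g2 L2 = z" for g1 L1 g2 L2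
  proof -
    have "0 \<le> L1" "0 \<le> L2" using g1 g2 unfolding arclength_param_def by auto
    then have "(\<lambda>t. if t \<le> L1 then g1 t else g2 (t - L1)) 0 = x"
      "(\<lambda>t. if t \<le> L1 then g1 t else g2 (t - L1)) (L1 + L2) = z"
      using g1 g2 by (auto simp: antisym)
    from d_unif_le_unif_length[OF arclength_param_append[OF g1(1) g2(1)] this]
    show ?thesis using unif_length_append[OF g1(1) g2(1)] g1 g2 by simp
  qed
  obtain g0 where g0: "arclength_param g0 (dist x y)" "g0 0 = x" "g0 (dist x y) = y"
    using geodesic_segment[OF geo] by blast
  obtain g0' where g0': "arclength_param g0' (dist y z)" "g0' 0 = y" "g0' (dist y z) = z"
    using geodesic_segment[OF geo] by blast
  have "d_unif \<epsilon> p x z - unif_length \<epsilon> p g2 L2 \<le> d_unif \<epsilon> p x y"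
    if "arclength_param g2 L2" "g2 0 = y" "g2 L2 = z" for g2 L2
    unfolding d_unif_eq_Inf_unif_length[of \<epsilon> p x y]
    by (intro cInf_greatest) (use g0 along_joined that in \<open>force+\<close>)
  then have "d_unif \<epsilon> p x z - d_unif \<epsilon> p x y \<le> d_unif \<epsilon> p y z"
    unfolding d_unif_eq_Inf_unif_length[of \<epsilon> p y z]
    by (intro cInf_greatest) (use g0' in \<open>force+\<close>)
  then show ?thesis by simp
qed

lemma gromov_product_commute: "gromov_product p x y = gromov_product p y x"
  unfolding gromov_product_def by (simp add: dist_commute)

lemma gromov_product_self: "gromov_product p x x = dist p x"
  unfolding gromov_product_def by simp

lemma d_unif_le_exp_gromov_product:
  assumes geo: "geodesic_space TYPE('a::metric_space)" and "\<epsilon> > 0"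
  shows "d_unif \<epsilon> p x (y::'a) \<le> 2 / \<epsilon> * exp (- \<epsilon> * gromov_product p x y)"
proof -
  define D where "D = dist x y"
  obtain g where g: "arclength_param g D" "g 0 = x" "g D = y"
    and iso: "\<And>v w. v \<in> {0..D} \<Longrightarrow> w \<in> {0..D} \<Longrightarrow> dist (g v) (g w) = \<bar>v - w\<bar>"
    using geodesic_segment[OF geo, of x y] unfolding D_def by blast
  define c where "c = gromov_product p x y"
  define t0 where "t0 = dist p x - c"
  have c_eq: "c = (dist p x + dist p y - D) / 2" unfolding c_def D_def gromov_product_def ..
  have "dist p y \<le> dist p x + D" "dist p x \<le> dist p y + D"
    using dist_triangle[of p y x] dist_triangle[of p x y] unfolding D_def
    by (auto simp: dist_commute)
  then have t0: "0 \<le> t0" "t0 \<le> D" unfolding t0_def c_eq by argo+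
  \<comment> \<open>Along the geodesic, the distance to p is at least \<open>c + \<bar>t - t0\<bar>\<close> (triangle inequality
    through the endpoints), so the weight is dominated by two exponentials meeting at \<open>t0\<close>.\<close>
  define F where "F = (\<lambda>t. exp (- \<epsilon> * dist p (g t)))"
  define G1 where "G1 t = exp (- \<epsilon> * (c + t0 - t))" for t
  define G2 where "G2 t = exp (- \<epsilon> * (c + t - t0))" for t
  have FG1: "F t \<le> G1 t" if "t \<in> {0..t0}" for t
  proof -
    have "dist p x \<le> dist p (g t) + dist (g t) (g 0)"
      using dist_triangle[of p x "g t"] g(2) by (simp add: dist_commute)
    moreover have "dist (g t) (g 0) = t" using iso[of t 0] that t0 by simp
    ultimately have "c + t0 - t \<le> dist p (g t)" unfolding t0_def by simp
    then show ?thesis unfolding F_def G1_def using \<open>\<epsilon> > 0\<close> by simp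
  qed
  have FG2: "F t \<le> G2 t" if "t \<in> {t0..D}" for t
  proof -
    have "dist p y \<le> dist p (g t) + dist (g t) (g D)"
      using dist_triangle[of p y "g t"] g(3) by (simp add: dist_commute)
    moreover have "dist (g t) (g D) = D - t" using iso[of t D] that t0 by simp
    ultimately have "c + t - t0 \<le> dist p (g t)" unfolding t0_def c_eq by simp
    then show ?thesis unfolding F_def G2_def using \<open>\<epsilon> > 0\<close> by simp
  qed
  have G1_int: "(G1 has_integral (G1 t0 / \<epsilon> - G1 0 / \<epsilon>)) {0..t0}"
  proof (rule fundamental_theorem_of_calculus[OF t0(1)])
    fix t assume "t \<in> {0..t0}"
    have "((\<lambda>t. G1 t / \<epsilon>) has_real_derivative G1 t) (at t within {0..t0})"
      unfolding G1_def using \<open>\<epsilon> > 0\<close> by (auto intro!: derivative_eq_intros simp: field_simps)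
    then show "((\<lambda>t. G1 t / \<epsilon>) has_vector_derivative G1 t) (at t within {0..t0})"
      by (simp add: has_real_derivative_iff_has_vector_derivative)
  qed
  have G2_int: "(G2 has_integral (G2 t0 / \<epsilon> - G2 D / \<epsilon>)) {t0..D}"
  proof -
    have "(G2 has_integral (- G2 D / \<epsilon> - (- G2 t0 / \<epsilon>))) {t0..D}"
    proof (rule fundamental_theorem_of_calculus[OF t0(2)])
      fix t assume "t \<in> {t0..D}"
      have "((\<lambda>t. - G2 t / \<epsilon>) has_real_derivative G2 t) (at t within {t0..D})"
        unfolding G2_def using \<open>\<epsilon> > 0\<close> by (auto intro!: derivative_eq_intros simp: field_simps)
      then show "((\<lambda>t. - G2 t / \<epsilon>) has_vector_derivative G2 t) (at t within {t0..D})"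
        by (simp add: has_real_derivative_iff_has_vector_derivative)
    qed
    then show ?thesis by simp
  qed
  have F_int: "F integrable_on {0..D}"
    unfolding F_def by (rule lipschitz_weight_integrable[OF arclength_param_lipschitz[OF g(1)]])
  have "unif_length \<epsilon> p g D = integral {0..D} F" by (simp add: unif_length_def F_def)
  then have "d_unif \<epsilon> p x y \<le> integral {0..t0} F + integral {t0..D} F"
    using d_unif_le_unif_length[OF g, of \<epsilon> p] Henstock_Kurzweil_Integration.integral_combine[OF t0 F_int]
    by simp
  also have "\<dots> \<le> (G1 t0 / \<epsilon> - G1 0 / \<epsilon>) + (G2 t0 / \<epsilon> - G2 D / \<epsilon>)"
    using integral_le[OF integrable_subinterval_real[OF F_int] has_integral_integrable[OF G1_int] FG1]
      integral_le[OF integrable_subinterval_real[OF F_int] has_integral_integrable[OF G2_int] FG2]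
      integral_unique[OF G1_int] integral_unique[OF G2_int] t0
    by (intro add_mono) auto
  also have "\<dots> \<le> G1 t0 / \<epsilon> + G2 t0 / \<epsilon>"
  proof -
    have "0 \<le> G1 0 / \<epsilon>" "0 \<le> G2 D / \<epsilon>" using \<open>\<epsilon> > 0\<close> by (simp_all add: G1_def G2_def)
    then show ?thesis by linarith
  qed
  also have "\<dots> = 2 / \<epsilon> * exp (- \<epsilon> * gromov_product p x y)"
    unfolding G1_def G2_def c_def by (simp add: field_simps)
  finally show ?thesis .
qed

lemma tendsto_d_unif_zero:
  assumes geo: "geodesic_space TYPE('a::metric_space)" and "\<epsilon> > 0"
    and lim: "filterlim (\<lambda>k. gromov_product p (u k) (v k :: 'a)) at_top F"
  shows "((\<lambda>k. d_unif \<epsilon> p (u k) (v k)) \<longlongrightarrow> 0) F"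
proof (rule tendsto_sandwich)
  show "\<forall>\<^sub>F k in F. 0 \<le> d_unif \<epsilon> p (u k) (v k)"
    using d_unif_nonneg[OF geo] by simp
  show "\<forall>\<^sub>F k in F. d_unif \<epsilon> p (u k) (v k) \<le> 2 / \<epsilon> * exp (- \<epsilon> * gromov_product p (u k) (v k))"
    using d_unif_le_exp_gromov_product[OF geo \<open>\<epsilon> > 0\<close>] by simp
  have "filterlim (\<lambda>k. \<epsilon> * gromov_product p (u k) (v k)) at_top F"
    by (rule filterlim_tendsto_pos_mult_at_top[OF tendsto_const \<open>\<epsilon> > 0\<close> lim])
  then have "filterlim (\<lambda>k. - \<epsilon> * gromov_product p (u k) (v k)) at_bot F"
    by (simp add: filterlim_uminus_at_top)
  then have "((\<lambda>k. exp (- \<epsilon> * gromov_product p (u k) (v k))) \<longlongrightarrow> 0) F"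
    by (rule filterlim_compose[OF exp_at_bot])
  then show "((\<lambda>k. 2 / \<epsilon> * exp (- \<epsilon> * gromov_product p (u k) (v k))) \<longlongrightarrow> 0) F"
    by (rule tendsto_mult_right_zero)
qed simp

lemma gromov_seq_unif_cauchy:
  assumes geo: "geodesic_space TYPE('a::metric_space)" and "\<epsilon> > 0" and "gromov_seq p (c :: nat \<Rightarrow> 'a)"
  shows "unif_cauchy \<epsilon> p c"
  unfolding unif_cauchy_def
proof (intro allI impI)
  fix e :: real assume "e > 0"
  have "filterlim (\<lambda>k. gromov_product p (c (snd k)) (c (fst k))) at_top (sequentially \<times>\<^sub>F sequentially)"
    using assms(3) unfolding gromov_seq_def filterlim_at_top eventually_prod_sequentially by simp
  from order_tendstoD(2)[OF tendsto_d_unif_zero[OF geo \<open>\<epsilon> > 0\<close> this] \<open>e > 0\<close>]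
  show "\<exists>N. \<forall>m\<ge>N. \<forall>n\<ge>N. d_unif \<epsilon> p (c m) (c n) < e"
    unfolding eventually_prod_sequentially by simp
qed

lemma equiv_unif_equiv:
  assumes geo: "geodesic_space TYPE('a::metric_space)"
  shows "equiv {c :: nat \<Rightarrow> 'a. unif_cauchy \<epsilon> p c} (unif_equiv \<epsilon> p)"
proof (rule equivI)
  show "unif_equiv \<epsilon> p \<subseteq> {c. unif_cauchy \<epsilon> p c} \<times> {c. unif_cauchy \<epsilon> p c}"
    unfolding unif_equiv_def by auto
  show "refl_on {c. unif_cauchy \<epsilon> p c} (unif_equiv \<epsilon> p)"
    by (rule refl_onI) (simp add: unif_equiv_def d_unif_self[OF geo])
  show "sym (unif_equiv \<epsilon> p)"
  proof (rule symI)
    fix a b assume "(a, b) \<in> unif_equiv \<epsilon> p"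
    moreover have "(\<lambda>n. d_unif \<epsilon> p (b n) (a n)) = (\<lambda>n. d_unif \<epsilon> p (a n) (b n))"
      by (rule ext) (rule d_unif_commute[OF geo])
    ultimately show "(b, a) \<in> unif_equiv \<epsilon> p" unfolding unif_equiv_def by simp
  qed
  show "trans (unif_equiv \<epsilon> p)"
  proof (rule transI)
    fix a b c assume "(a, b) \<in> unif_equiv \<epsilon> p" "(b, c) \<in> unif_equiv \<epsilon> p"
    then have ab: "(\<lambda>n. d_unif \<epsilon> p (a n) (b n)) \<longlonglongrightarrow> 0"
      and bc: "(\<lambda>n. d_unif \<epsilon> p (b n) (c n)) \<longlonglongrightarrow> 0"
      and cauchy: "unif_cauchy \<epsilon> p a" "unif_cauchy \<epsilon> p c"
      unfolding unif_equiv_def by auto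
    have "(\<lambda>n. d_unif \<epsilon> p (a n) (c n)) \<longlonglongrightarrow> 0"
    proof (rule tendsto_sandwich[where f = "\<lambda>_. 0"])
      show "\<forall>\<^sub>F n in sequentially. d_unif \<epsilon> p (a n) (c n) \<le> d_unif \<epsilon> p (a n) (b n) + d_unif \<epsilon> p (b n) (c n)"
        using d_unif_triangle[OF geo] by simp
    qed (use d_unif_nonneg[OF geo] tendsto_add_zero[OF ab bc] in simp_all)
    then show "(a, c) \<in> unif_equiv \<epsilon> p" using cauchy unfolding unif_equiv_def by simp
  qed
qed

lemma unif_equiv_subseq:
  assumes geo: "geodesic_space TYPE('a::metric_space)"
    and cauchy: "unif_cauchy \<epsilon> p (c :: nat \<Rightarrow> 'a)" and q: "strict_mono q"
  shows "(c, c \<circ> q) \<in> unif_equiv \<epsilon> p"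
proof -
  have tail: "\<exists>N. \<forall>m\<ge>N. \<forall>n\<ge>N. d_unif \<epsilon> p (c m) (c (q n)) < e" if "e > 0" for e
  proof -
    obtain N where N: "\<forall>m\<ge>N. \<forall>n\<ge>N. d_unif \<epsilon> p (c m) (c n) < e"
      using cauchy \<open>e > 0\<close> unfolding unif_cauchy_def by blast
    have "d_unif \<epsilon> p (c m) (c (q n)) < e" if "N \<le> m" "N \<le> n" for m n
      using N seq_suble[OF q, of n] that by simp
    then show ?thesis by blast
  qed
  have "unif_cauchy \<epsilon> p (c \<circ> q)"
    unfolding unif_cauchy_def
  proof (intro allI impI)
    fix e :: real assume "e > 0"
    then obtain N where N: "\<forall>m\<ge>N. \<forall>n\<ge>N. d_unif \<epsilon> p (c m) (c (q n)) < e" using tail by blast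
    have "d_unif \<epsilon> p ((c \<circ> q) m) ((c \<circ> q) n) < e" if "N \<le> m" "N \<le> n" for m n
      using N seq_suble[OF q, of m] that by simp
    then show "\<exists>N. \<forall>m\<ge>N. \<forall>n\<ge>N. d_unif \<epsilon> p ((c \<circ> q) m) ((c \<circ> q) n) < e" by blast
  qed
  moreover have "(\<lambda>k. d_unif \<epsilon> p (c k) (c (q k))) \<longlonglongrightarrow> 0"
  proof (rule LIMSEQ_I)
    fix e :: real assume "e > 0"
    then obtain N where N: "\<forall>m\<ge>N. \<forall>n\<ge>N. d_unif \<epsilon> p (c m) (c (q n)) < e" using tail by blast
    have "norm (d_unif \<epsilon> p (c k) (c (q k)) - 0) < e" if "N \<le> k" for k
      using N that d_unif_nonneg[OF geo, of \<epsilon> p "c k" "c (q k)"] by simp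
    then show "\<exists>N. \<forall>k\<ge>N. norm (d_unif \<epsilon> p (c k) (c (q k)) - 0) < e" by blast
  qed
  ultimately show ?thesis using cauchy unfolding unif_equiv_def by simp
qed

lemma unif_boundary_eq_class:
  assumes geo: "geodesic_space TYPE('a::metric_space)"
    and "X \<in> unif_boundary \<epsilon> p" and "(c :: nat \<Rightarrow> 'a) \<in> X"
  shows "X = unif_equiv \<epsilon> p `` {c}"
proof -
  obtain c0 where "X = unif_equiv \<epsilon> p `` {c0}"
    using assms(2) unfolding unif_boundary_def by (rule quotientE)
  with assms(3) show ?thesis using equiv_class_eq[OF equiv_unif_equiv[OF geo]] by simp
qed

section \<open>Ultrafilters\<close>

lemma ultrafilter_le:
  fixes F :: "'a filter"
  assumes "F \<noteq> bot"
  obtains U where "U \<le> F" "U \<noteq> bot" "\<And>P. eventually P U \<or> eventually (\<lambda>x. \<not> P x) U"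
proof -
  define A where "A = {U. U \<le> F \<and> U \<noteq> bot}"
  \<comment> \<open>Zorn for the reversed order: since \<open>\<le>\<close> means ``finer'', this yields a finest proper
    filter below \<open>F\<close>.\<close>
  have "\<exists>M\<in>A. \<forall>U\<in>A. U \<le> M \<longrightarrow> U = M"
  proof (rule predicate_Zorn)
    show "partial_order_on A (relation_of (\<lambda>U V. V \<le> U) A)"
      by (rule partial_order_on_relation_ofI) (simp_all add: order_trans)
  next
    fix C assume C: "C \<in> Chains (relation_of (\<lambda>U V. V \<le> U) A)"
    show "\<exists>u\<in>A. \<forall>U\<in>C. u \<le> U"
    proof (cases "C = {}")
      case True
      then show ?thesis using assms unfolding A_def by auto
    next
      case False
      have CA: "C \<subseteq> A" using Chains_relation_of[OF C] .
      have comparable: "U \<le> V \<or> V \<le> U" if "U \<in> C" "V \<in> C" for U V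
        using C that unfolding Chains_def relation_of_def by auto
      have "\<exists>W\<in>C. W \<le> inf U V" if "U \<in> C" "V \<in> C" for U V
      proof (cases "U \<le> V")
        case True
        then show ?thesis using that(1) by (intro bexI[of _ U]) simp_all
      next
        case False
        then have "V \<le> U" using comparable[OF that] by blast
        then show ?thesis using that(2) by (intro bexI[of _ V]) simp_all
      qed
      then have ev: "eventually P (Inf C) \<longleftrightarrow> (\<exists>U\<in>C. eventually P U)" for P
        by (rule eventually_Inf_base[OF False])
      have "Inf C \<noteq> bot"
        using ev[of "\<lambda>_. False"] CA unfolding A_def eventually_False by auto
      moreover obtain U where "U \<in> C" using False by blast
      then have "Inf C \<le> F" using CA unfolding A_def by (auto intro: Inf_lower2)
      ultimately show ?thesis unfolding A_def by (auto intro: Inf_lower)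
    qed
  qed
  then obtain M where M: "M \<le> F" "M \<noteq> bot"
    and minimal: "\<And>U. U \<le> F \<Longrightarrow> U \<noteq> bot \<Longrightarrow> U \<le> M \<Longrightarrow> U = M"
    unfolding A_def by blast
  have "eventually P M \<or> eventually (\<lambda>x. \<not> P x) M" for P
  proof (rule ccontr)
    assume neither: "\<not> (eventually P M \<or> eventually (\<lambda>x. \<not> P x) M)"
    have "inf M (principal {x. P x}) \<noteq> bot"
      using neither unfolding eventually_False[symmetric] eventually_inf_principal by simp
    moreover have "inf M (principal {x. P x}) \<le> F" using order_trans[OF inf_le1 M(1)] .
    ultimately have "inf M (principal {x. P x}) = M" using minimal inf_le1 by blast
    moreover have "eventually P (inf M (principal {x. P x}))"
      unfolding eventually_inf_principal by simp
    ultimately have "eventually P M" by simp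
    with neither show False by simp
  qed
  with M that show ?thesis by blast
qed

lemma ultrafilter_compact_limit:
  fixes f :: "'b \<Rightarrow> 'a::topological_space"
  assumes "U \<noteq> bot" and ultra: "\<And>P. eventually P U \<or> eventually (\<lambda>x. \<not> P x) U"
    and "compact K" and "eventually (\<lambda>j. f j \<in> K) U"
  obtains l where "(f \<longlongrightarrow> l) U"
proof -
  have "filtermap f U \<noteq> bot" using assms(1) by (simp add: filtermap_bot_iff)
  moreover have "eventually (\<lambda>x. x \<in> K) (filtermap f U)"
    using assms(4) by (simp add: eventually_filtermap)
  ultimately obtain l where l: "inf (nhds l) (filtermap f U) \<noteq> bot"
    using \<open>compact K\<close> unfolding compact_filter by blast
  have "(f \<longlongrightarrow> l) U"
    unfolding tendsto_def
  proof (intro allI impI)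
    fix S assume "open S" "l \<in> S"
    show "eventually (\<lambda>j. f j \<in> S) U"
    proof (rule ccontr)
      assume "\<not> eventually (\<lambda>j. f j \<in> S) U"
      then have "eventually (\<lambda>j. f j \<notin> S) U" using ultra by blast
      then have "eventually (\<lambda>x. x \<notin> S) (filtermap f U)" by (simp add: eventually_filtermap)
      moreover have "eventually (\<lambda>x. x \<in> S) (nhds l)"
        using \<open>open S\<close> \<open>l \<in> S\<close> by (rule eventually_nhds_in_open)
      ultimately have "eventually (\<lambda>_. False) (inf (nhds l) (filtermap f U))"
        unfolding eventually_inf by blast
      with l show False by (simp add: eventually_False)
    qed
  qed
  with that show ?thesis .
qed

section \<open>Geodesic rays from Gromov sequences\<close>

lemma gromov_hyperbolic_geodesic_space:
  "gromov_hyperbolic \<delta> TYPE('a::metric_space) \<Longrightarrow> geodesic_space TYPE('a)"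
  unfolding gromov_hyperbolic_def by simp

lemma gromov_hyperbolic_proper_space:
  "gromov_hyperbolic \<delta> TYPE('a::metric_space) \<Longrightarrow> proper_space TYPE('a)"
  unfolding gromov_hyperbolic_def by simp

lemma gromov_hyperbolic_min_le:
  "gromov_hyperbolic \<delta> TYPE('a::metric_space) \<Longrightarrow>
    min (gromov_product w x y) (gromov_product w y z) - \<delta> \<le> gromov_product w x (z::'a)"
  unfolding gromov_hyperbolic_def by blast

lemma tendsto_gromov_product:
  "(f \<longlongrightarrow> y) F \<Longrightarrow> ((\<lambda>j. gromov_product p x (f j)) \<longlongrightarrow> gromov_product p x y) F"
  unfolding gromov_product_def by (intro tendsto_intros) auto

lemma gromov_product_at_top_trans:
  assumes hyp: "gromov_hyperbolic \<delta> TYPE('a::metric_space)"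
    and uv: "filterlim (\<lambda>k. gromov_product p (u k) (v k :: 'a)) at_top F"
    and vw: "filterlim (\<lambda>k. gromov_product p (v k) (w k)) at_top F"
  shows "filterlim (\<lambda>k. gromov_product p (u k) (w k)) at_top F"
  unfolding filterlim_at_top
proof
  fix Z :: real
  have "eventually (\<lambda>k. Z + \<delta> \<le> gromov_product p (u k) (v k)) F"
    "eventually (\<lambda>k. Z + \<delta> \<le> gromov_product p (v k) (w k)) F"
    using uv vw unfolding filterlim_at_top by blast+
  then show "eventually (\<lambda>k. Z \<le> gromov_product p (u k) (w k)) F"
  proof eventually_elim
    case (elim k)
    then have "Z + \<delta> \<le> min (gromov_product p (u k) (v k)) (gromov_product p (v k) (w k))" by simp
    then show ?case using gromov_hyperbolic_min_le[OF hyp, of p "u k" "v k" "w k"] by linarith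
  qed
qed

lemma geodesic_ray_dist_base:
  assumes "geodesic_ray p \<gamma>" "0 \<le> t"
  shows "dist p (\<gamma> t) = t"
proof -
  have "dist (\<gamma> 0) (\<gamma> t) = \<bar>0 - t\<bar>" "\<gamma> 0 = p" using assms unfolding geodesic_ray_def by auto
  then show ?thesis using assms(2) by simp
qed

lemma ray_equiv_refl: "geodesic_ray p \<gamma> \<Longrightarrow> (\<gamma>, \<gamma>) \<in> ray_equiv p"
  unfolding ray_equiv_def by (auto intro: bdd_aboveI[where M = 0])

lemma ray_equiv_gromov_product_at_top:
  assumes "(\<gamma>, \<eta>) \<in> ray_equiv p"
  shows "filterlim (\<lambda>k. gromov_product p (\<gamma> (real k)) (\<eta> (real k))) at_top sequentially"
proof -
  have rays: "geodesic_ray p \<gamma>" "geodesic_ray p \<eta>"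
    and "bdd_above ((\<lambda>t. dist (\<gamma> t) (\<eta> t)) ` {0..})"
    using assms unfolding ray_equiv_def by auto
  then obtain K where K: "\<And>t. 0 \<le> t \<Longrightarrow> dist (\<gamma> t) (\<eta> t) \<le> K"
    unfolding bdd_above_def by auto
  have lower: "- K / 2 + real k \<le> gromov_product p (\<gamma> (real k)) (\<eta> (real k))" for k
    using K[of "real k"] geodesic_ray_dist_base[OF rays(1), of "real k"]
      geodesic_ray_dist_base[OF rays(2), of "real k"]
    unfolding gromov_product_def by simp
  show ?thesis
    using filterlim_at_top_mono[OF filterlim_tendsto_add_at_top[OF tendsto_const[of "- K / 2"]
          filterlim_real_sequentially]] lower by simp
qed

lemma gromov_seq_geodesic_ray:
  fixes a :: "nat \<Rightarrow> 'a::metric_space"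
  assumes hyp: "gromov_hyperbolic \<delta> TYPE('a)" and a: "gromov_seq p a"
  obtains \<gamma> where "geodesic_ray p \<gamma>"
    "filterlim (\<lambda>k. gromov_product p (a k) (\<gamma> (real k))) at_top sequentially"
proof -
  have "\<forall>j. \<exists>g. g 0 = p \<and> g (dist p (a j)) = a j \<and>
      (\<forall>s\<in>{0..dist p (a j)}. \<forall>t\<in>{0..dist p (a j)}. dist (g s) (g t) = \<bar>s - t\<bar>)"
    using gromov_hyperbolic_geodesic_space[OF hyp] unfolding geodesic_space_def by blast
  then obtain \<sigma> where \<sigma>0: "\<And>j. \<sigma> j 0 = p" and \<sigma>a: "\<And>j. \<sigma> j (dist p (a j)) = a j"
    and \<sigma>iso: "\<And>j s t. s \<in> {0..dist p (a j)} \<Longrightarrow> t \<in> {0..dist p (a j)} \<Longrightarrow>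
      dist (\<sigma> j s) (\<sigma> j t) = \<bar>s - t\<bar>"
    by metis
  \<comment> \<open>The ray is the limit of the geodesic segments \<open>\<sigma> j\<close> from \<open>p\<close> to \<open>a j\<close> along a free
    ultrafilter; properness provides the pointwise limits.\<close>
  obtain U where U: "U \<le> sequentially" "U \<noteq> bot"
    and ultra: "\<And>P. eventually P U \<or> eventually (\<lambda>x. \<not> P x) U"
    using ultrafilter_le[OF sequentially_bot] by blast
  have far: "eventually (\<lambda>j. t \<le> dist p (a j)) U" for t
  proof -
    obtain N where N: "\<forall>n\<ge>N. \<forall>m\<ge>N. t \<le> gromov_product p (a n) (a m)"
      using a unfolding gromov_seq_def by blast
    have "t \<le> dist p (a j)" if "N \<le> j" for j
      using N[rule_format, OF that that] gromov_product_self[of p "a j"] by linarith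
    then have "eventually (\<lambda>j. t \<le> dist p (a j)) sequentially"
      unfolding eventually_sequentially by blast
    with U(1) show ?thesis by (rule filter_leD)
  qed
  have dist_\<sigma>: "dist p (\<sigma> j t) = t" if "t \<in> {0..dist p (a j)}" for j t
    using \<sigma>iso[of 0 j t] \<sigma>0 that by simp
  define \<gamma> where "\<gamma> t = Lim U (\<lambda>j. \<sigma> j t)" for t
  have lim: "((\<lambda>j. \<sigma> j t) \<longlongrightarrow> \<gamma> t) U" if "0 \<le> t" for t
  proof -
    have "compact (cball p t)"
      using gromov_hyperbolic_proper_space[OF hyp] unfolding proper_space_def by blast
    moreover have "eventually (\<lambda>j. \<sigma> j t \<in> cball p t) U"
      using far[of t]
    proof eventually_elim
      case (elim j)
      then show ?case using dist_\<sigma>[of t j] that by simp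
    qed
    ultimately obtain l where l: "((\<lambda>j. \<sigma> j t) \<longlongrightarrow> l) U"
      by (rule ultrafilter_compact_limit[OF U(2) ultra])
    moreover have "\<gamma> t = l" unfolding \<gamma>_def by (rule tendsto_Lim[OF U(2) l])
    ultimately show ?thesis by simp
  qed
  have ray: "geodesic_ray p \<gamma>"
    unfolding geodesic_ray_def
  proof (intro conjI allI impI)
    show "\<gamma> 0 = p" using tendsto_unique[OF U(2) lim[of 0]] \<sigma>0 by simp
    fix s t :: real assume "0 \<le> s" "0 \<le> t"
    have "eventually (\<lambda>j. \<bar>s - t\<bar> = dist (\<sigma> j s) (\<sigma> j t)) U"
      using far[of "max s t"]
    proof eventually_elim
      case (elim j)
      then show ?case using \<sigma>iso[of s j t] \<open>0 \<le> s\<close> \<open>0 \<le> t\<close> by simp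
    qed
    then have "((\<lambda>j. dist (\<sigma> j s) (\<sigma> j t)) \<longlongrightarrow> \<bar>s - t\<bar>) U"
      by (rule Lim_transform_eventually[OF tendsto_const])
    then show "dist (\<gamma> s) (\<gamma> t) = \<bar>s - t\<bar>"
      using tendsto_unique[OF U(2) tendsto_dist[OF lim[OF \<open>0 \<le> s\<close>] lim[OF \<open>0 \<le> t\<close>]]] by simp
  qed
  have bound: "min M t - \<delta> \<le> gromov_product p (a k) (\<gamma> t)"
    if N: "\<forall>n\<ge>N. \<forall>m\<ge>N. M \<le> gromov_product p (a n) (a m)" and "N \<le> k" "0 \<le> t" for M N k t
  proof (rule tendsto_lowerbound)
    show "((\<lambda>j. gromov_product p (a k) (\<sigma> j t)) \<longlongrightarrow> gromov_product p (a k) (\<gamma> t)) U"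
      using lim[OF \<open>0 \<le> t\<close>] by (rule tendsto_gromov_product)
    have "eventually (\<lambda>j. N \<le> j) U" using U(1) by (rule filter_leD) (rule eventually_ge_at_top)
    then show "eventually (\<lambda>j. min M t - \<delta> \<le> gromov_product p (a k) (\<sigma> j t)) U"
      using far[of t]
    proof eventually_elim
      case (elim j)
      then have "dist (a j) (\<sigma> j t) = dist p (a j) - t"
        using \<sigma>iso[of "dist p (a j)" j t] \<sigma>a[of j] \<open>0 \<le> t\<close> by simp
      then have "gromov_product p (a j) (\<sigma> j t) = t"
        using dist_\<sigma>[of t j] elim \<open>0 \<le> t\<close> unfolding gromov_product_def by simp
      moreover have "M \<le> gromov_product p (a k) (a j)" using N \<open>N \<le> k\<close> elim by blast
      ultimately have "min M t \<le> min (gromov_product p (a k) (a j)) (gromov_product p (a j) (\<sigma> j t))"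
        by (simp add: min.coboundedI1)
      then show ?case using gromov_hyperbolic_min_le[OF hyp, of p "a k" "a j" "\<sigma> j t"] by linarith
    qed
  qed (use U(2) in simp)
  have "filterlim (\<lambda>k. gromov_product p (a k) (\<gamma> (real k))) at_top sequentially"
    unfolding filterlim_at_top eventually_sequentially
  proof
    fix Z :: real
    obtain N where N: "\<forall>n\<ge>N. \<forall>m\<ge>N. Z + \<delta> \<le> gromov_product p (a n) (a m)"
      using a unfolding gromov_seq_def by blast
    have "Z \<le> gromov_product p (a k) (\<gamma> (real k))" if k: "max N (nat \<lceil>Z + \<delta>\<rceil>) \<le> k" for k
    proof -
      have "Z + \<delta> \<le> real k" using k by linarith
      moreover have "min (Z + \<delta>) (real k) - \<delta> \<le> gromov_product p (a k) (\<gamma> (real k))"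
        using k by (intro bound[OF N]) simp_all
      ultimately show ?thesis by simp
    qed
    then show "\<exists>N. \<forall>k\<ge>N. Z \<le> gromov_product p (a k) (\<gamma> (real k))" by blast
  qed
  with ray that show ?thesis by blast
qed

lemma gromov_product_geodesic_ray:
  assumes "geodesic_ray p \<gamma>" "0 \<le> s" "0 \<le> t"
  shows "gromov_product p (\<gamma> s) (\<gamma> t) = min s t"
proof -
  have "dist (\<gamma> s) (\<gamma> t) = \<bar>s - t\<bar>" using assms unfolding geodesic_ray_def by blast
  then show ?thesis
    using geodesic_ray_dist_base[OF assms(1,2)] geodesic_ray_dist_base[OF assms(1,3)]
    unfolding gromov_product_def by (simp add: min_def abs_if)
qed

lemma geodesic_ray_gromov_seq:
  assumes "geodesic_ray p \<gamma>"
  shows "gromov_seq p (\<lambda>k. \<gamma> (real k))"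
  unfolding gromov_seq_def
proof
  fix M :: real
  have "M \<le> gromov_product p (\<gamma> (real n)) (\<gamma> (real m))" if "nat \<lceil>M\<rceil> \<le> n" "nat \<lceil>M\<rceil> \<le> m" for n m
    using gromov_product_geodesic_ray[OF assms, of "real n" "real m"] that by linarith
  then show "\<exists>N. \<forall>n\<ge>N. \<forall>m\<ge>N. M \<le> gromov_product p (\<gamma> (real n)) (\<gamma> (real m))" by blast
qed

lemma boundary_map_eq_of_close_ray:
  fixes zs :: "nat \<Rightarrow> 'a::metric_space"
  assumes geo: "geodesic_space TYPE('a)" and "\<epsilon> > 0"
    and ray: "geodesic_ray p \<gamma>"
    and \<gamma>_boundary: "boundary_map \<epsilon> p (ray_equiv p `` {\<gamma>}) \<in> unif_boundary \<epsilon> p"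
    and x: "x \<in> unif_boundary \<epsilon> p" and conv: "unif_converges_to \<epsilon> p zs x"
    and q: "strict_mono q" and gs: "gromov_seq p (zs \<circ> q)"
    and close: "filterlim (\<lambda>k. gromov_product p (zs (q k)) (\<gamma> (real k))) at_top sequentially"
  shows "boundary_map \<epsilon> p (ray_equiv p `` {\<gamma>}) = x"
proof -
  define \<xi> where "\<xi> k = \<gamma> (real k)" for k
  have equiv: "equiv {c. unif_cauchy \<epsilon> p c} (unif_equiv \<epsilon> p)"
    by (rule equiv_unif_equiv[OF geo])
  then have trans: "trans (unif_equiv \<epsilon> p)" by (rule equivE)
  have \<xi>_cauchy: "unif_cauchy \<epsilon> p \<xi>"
    unfolding \<xi>_def by (rule gromov_seq_unif_cauchy[OF geo \<open>\<epsilon> > 0\<close> geodesic_ray_gromov_seq[OF ray]])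
  have zsq_cauchy: "unif_cauchy \<epsilon> p (zs \<circ> q)" by (rule gromov_seq_unif_cauchy[OF geo \<open>\<epsilon> > 0\<close> gs])
  have "(\<xi>, \<xi>) \<in> unif_equiv \<epsilon> p"
    using \<xi>_cauchy equiv unfolding equiv_def refl_on_def by blast
  then have "\<xi> \<in> boundary_map \<epsilon> p (ray_equiv p `` {\<gamma>})"
    unfolding boundary_map_def \<xi>_def using ray_equiv_refl[OF ray] by blast
  then have \<gamma>_class: "boundary_map \<epsilon> p (ray_equiv p `` {\<gamma>}) = unif_equiv \<epsilon> p `` {\<xi>}"
    by (rule unif_boundary_eq_class[OF geo \<gamma>_boundary])
  obtain c where "c \<in> x" and zs_c: "(\<lambda>n. d_unif \<epsilon> p (zs n) (c n)) \<longlonglongrightarrow> 0"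
    using conv unfolding unif_converges_to_def by blast
  then have x_class: "x = unif_equiv \<epsilon> p `` {c}" by (intro unif_boundary_eq_class[OF geo x])
  with \<open>c \<in> x\<close> have "(c, c) \<in> unif_equiv \<epsilon> p" by simp
  then have c_cauchy: "unif_cauchy \<epsilon> p c" unfolding unif_equiv_def by simp
  have "(c, c \<circ> q) \<in> unif_equiv \<epsilon> p" by (rule unif_equiv_subseq[OF geo c_cauchy q])
  moreover have "(c \<circ> q, zs \<circ> q) \<in> unif_equiv \<epsilon> p"
  proof -
    have "(\<lambda>k. d_unif \<epsilon> p (zs (q k)) (c (q k))) \<longlonglongrightarrow> 0"
      using LIMSEQ_subseq_LIMSEQ[OF zs_c q] by (simp add: o_def)
    then have "(\<lambda>k. d_unif \<epsilon> p (c (q k)) (zs (q k))) \<longlonglongrightarrow> 0"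
      by (simp add: d_unif_commute[OF geo, of \<epsilon> p "c _"])
    then show ?thesis
      using unif_equiv_subseq[OF geo c_cauchy q] zsq_cauchy unfolding unif_equiv_def by simp
  qed
  moreover have "(zs \<circ> q, \<xi>) \<in> unif_equiv \<epsilon> p"
    using tendsto_d_unif_zero[OF geo \<open>\<epsilon> > 0\<close> close] zsq_cauchy \<xi>_cauchy
    unfolding unif_equiv_def \<xi>_def by simp
  ultimately have "(c, \<xi>) \<in> unif_equiv \<epsilon> p" using trans by (blast dest: transD)
  then show ?thesis using \<gamma>_class x_class equiv_class_eq[OF equiv] by simp
qed

lemma ray_class_in_gromov_boundary:
  "geodesic_ray p \<gamma> \<Longrightarrow> ray_equiv p `` {\<gamma>} \<in> gromov_boundary p"
  unfolding gromov_boundary_def by (intro quotientI) simp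

lemma gromov_subseq_boundary_ray:
  fixes zs :: "nat \<Rightarrow> 'a::metric_space"
  assumes hyp: "gromov_hyperbolic \<delta> TYPE('a)" and "\<epsilon> > 0"
    and into: "boundary_map \<epsilon> p ` gromov_boundary p \<subseteq> unif_boundary \<epsilon> p"
    and "x \<in> unif_boundary \<epsilon> p" and "unif_converges_to \<epsilon> p zs x"
    and "strict_mono q" and gs: "gromov_seq p (zs \<circ> q)"
  obtains \<gamma> where "geodesic_ray p \<gamma>" "boundary_map \<epsilon> p (ray_equiv p `` {\<gamma>}) = x"
    "filterlim (\<lambda>k. gromov_product p (zs (q k)) (\<gamma> (real k))) at_top sequentially"
proof -
  obtain \<gamma> where \<gamma>: "geodesic_ray p \<gamma>"
    and "filterlim (\<lambda>k. gromov_product p ((zs \<circ> q) k) (\<gamma> (real k))) at_top sequentially"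
    by (rule gromov_seq_geodesic_ray[OF hyp gs])
  then have close: "filterlim (\<lambda>k. gromov_product p (zs (q k)) (\<gamma> (real k))) at_top sequentially"
    by simp
  have "boundary_map \<epsilon> p (ray_equiv p `` {\<gamma>}) \<in> unif_boundary \<epsilon> p"
    using into ray_class_in_gromov_boundary[OF \<gamma>] by blast
  with assms(4-7) close
  have "boundary_map \<epsilon> p (ray_equiv p `` {\<gamma>}) = x"
    by (intro boundary_map_eq_of_close_ray[OF gromov_hyperbolic_geodesic_space[OF hyp] \<open>\<epsilon> > 0\<close> \<gamma>])
  with \<gamma> close that show ?thesis by blast
qed

theorem lemma3p5:
  fixes \<delta> \<epsilon> :: real and p :: "'a::metric_space"
    and x :: "(nat \<Rightarrow> 'a) set" and xs ys :: "nat \<Rightarrow> 'a"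
  assumes "gromov_hyperbolic \<delta> TYPE('a)"
    and "\<epsilon> > 0"
    and "bij_betw (boundary_map \<epsilon> p) (gromov_boundary p) (unif_boundary \<epsilon> p)"
    and "x \<in> unif_boundary \<epsilon> p"
    and "unif_converges_to \<epsilon> p xs x"
    and "unif_converges_to \<epsilon> p ys x"
  shows "\<forall>r s. strict_mono r \<and> strict_mono s \<and> gromov_seq p (xs \<circ> r) \<and> gromov_seq p (ys \<circ> s)
           \<longrightarrow> gromov_seq_equiv p (xs \<circ> r) (ys \<circ> s)"
proof (intro allI impI)
  fix r s assume "strict_mono r \<and> strict_mono s \<and> gromov_seq p (xs \<circ> r) \<and> gromov_seq p (ys \<circ> s)"
  then have r: "strict_mono r" "gromov_seq p (xs \<circ> r)" and s: "strict_mono s" "gromov_seq p (ys \<circ> s)"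
    by auto
  note into = bij_betw_imp_surj_on[OF assms(3), THEN equalityD1]
  obtain \<gamma> where \<gamma>: "geodesic_ray p \<gamma>" "boundary_map \<epsilon> p (ray_equiv p `` {\<gamma>}) = x"
    and xs_\<gamma>: "filterlim (\<lambda>k. gromov_product p (xs (r k)) (\<gamma> (real k))) at_top sequentially"
    by (rule gromov_subseq_boundary_ray[OF assms(1,2) into assms(4,5) r])
  obtain \<eta> where \<eta>: "geodesic_ray p \<eta>" "boundary_map \<epsilon> p (ray_equiv p `` {\<eta>}) = x"
    and ys_\<eta>: "filterlim (\<lambda>k. gromov_product p (ys (s k)) (\<eta> (real k))) at_top sequentially"
    by (rule gromov_subseq_boundary_ray[OF assms(1,2) into assms(4,6) s])
  have "ray_equiv p `` {\<gamma>} = ray_equiv p `` {\<eta>}"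
    using \<gamma>(2) \<eta>(2) by (intro inj_onD[OF bij_betw_imp_inj_on[OF assms(3)]]
        ray_class_in_gromov_boundary \<gamma>(1) \<eta>(1)) simp
  then have "(\<gamma>, \<eta>) \<in> ray_equiv p" using ray_equiv_refl[OF \<eta>(1)] by blast
  then have \<gamma>_\<eta>: "filterlim (\<lambda>k. gromov_product p (\<gamma> (real k)) (\<eta> (real k))) at_top sequentially"
    by (rule ray_equiv_gromov_product_at_top)
  have \<eta>_ys: "filterlim (\<lambda>k. gromov_product p (\<eta> (real k)) (ys (s k))) at_top sequentially"
    using ys_\<eta> by (simp add: gromov_product_commute)
  have "filterlim (\<lambda>k. gromov_product p (xs (r k)) (ys (s k))) at_top sequentially"
    by (rule gromov_product_at_top_trans[OF assms(1)
          gromov_product_at_top_trans[OF assms(1) xs_\<gamma> \<gamma>_\<eta>] \<eta>_ys])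
  then show "gromov_seq_equiv p (xs \<circ> r) (ys \<circ> s)"
    unfolding gromov_seq_equiv_def using r s by simp
qed

end
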